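(* Let $\mathcal{D}_0=\{\mathbf{x}^{(0)}_i\}_{i=1}^{n_0}$ and $\mathcal{D}_1=\{\mathbf{x}^{(1)}_j\}_{j=1}^{n_1}$ be finite sets of inputs with $n_0=n_1$, and let $f:\mathbb{R}^d\times\{0,1\}\to[0,1]$ be a model such that for each $s\in\{0,1\}$ there are no ties in $\{f_s(\mathbf{x}):\mathbf{x}\in\mathcal{D}_s\}$, where $f_s(\cdot)=f(\cdot,s)$. Let $\mathbf{T}^f$ be the fair matching function of $f$ computed with the empirical (uniform) distributions on $\mathcal{D}_0$ and $\mathcal{D}_1$. Then for any $s\in\{0,1\}$ and any $\mathbf{x}\in\mathcal{D}_s$, the matched individual is $\mathbf{T}^f(\mathbf{x})=f_{s'}^{-1}\circ F_{s'}^{-1}\circ F_s\circ f_s(\mathbf{x})$, where $s'=1-s$.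
   Context: $F_s$ denotes the (empirical) cumulative distribution function of the values $f_s(\mathbf{x})$, $\mathbf{x}\in\mathcal{D}_s$; $F_{s'}^{-1}$ is its quantile (inverse) function; and $f_{s'}^{-1}$ denotes the inverse of $f_{s'}$ restricted to $\mathcal{D}_{s'}$ (well defined since there are no ties). With $n_0=n_1$, a transport map from the empirical distribution on $\mathcal{D}_s$ to that on $\mathcal{D}_{s'}$ is a bijection $\mathbf{T}:\mathcal{D}_s\to\mathcal{D}_{s'}$. For such $\mathbf{T}_s$, $\Delta\mathrm{MDP}(f,\mathbf{T}_s)=\frac{1}{n_s}\sum_{\mathbf{x}\in\mathcal{D}_s}|f(\mathbf{x},s)-f(\mathbf{T}_s(\mathbf{x}),s')|$. The fair matching function of $f$ is defined as follows: $\mathbf{T}^f_s:=\arg\min_{\mathbf{T}_s}\Delta\mathrm{MDP}(f,\mathbf{T}_s)$ over transport maps from $\mathcal{D}_s$ to $\mathcal{D}_{s'}$, $\hat s:=\arg\min_{s\in\{0,1\}}\Delta\mathrm{MDP}(f,\mathbf{T}^f_s)$, and $\mathbf{T}^f:=\mathbf{T}^f_{\hat s}$. *)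

theory Defs
  imports "HOL-Analysis.Analysis"
begin

text \<open>Groups are indexed by s in {0,1} (type nat); the other group is 1 - s.
  Inputs live in real^'d.  D s is the finite data set of group s,
  and f x s is the model output f(x,s).\<close>

definition ecdf :: "('x \<Rightarrow> nat \<Rightarrow> real) \<Rightarrow> (nat \<Rightarrow> 'x set) \<Rightarrow> nat \<Rightarrow> real \<Rightarrow> real" where
  "ecdf f D s t = real (card {x \<in> D s. f x s \<le> t}) / real (card (D s))"

definition equantile :: "('x \<Rightarrow> nat \<Rightarrow> real) \<Rightarrow> (nat \<Rightarrow> 'x set) \<Rightarrow> nat \<Rightarrow> real \<Rightarrow> real" where
  "equantile f D s p = Inf {t. p \<le> ecdf f D s t}"

text \<open>The candidate map  f_{s'}^{-1} o F_{s'}^{-1} o F_s o f_s, with f_{s'}^{-1} the inverse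
  of f_{s'} restricted to D_{s'}.\<close>
definition rank_match :: "('x \<Rightarrow> nat \<Rightarrow> real) \<Rightarrow> (nat \<Rightarrow> 'x set) \<Rightarrow> nat \<Rightarrow> 'x \<Rightarrow> 'x" where
  "rank_match f D s x =
     the_inv_into (D (1 - s)) (\<lambda>y. f y (1 - s))
       (equantile f D (1 - s) (ecdf f D s (f x s)))"

text \<open>Transport maps between the empirical distributions (n_0 = n_1): bijections D_s -> D_{s'}.\<close>
definition transport_map :: "(nat \<Rightarrow> 'x set) \<Rightarrow> nat \<Rightarrow> ('x \<Rightarrow> 'x) \<Rightarrow> bool" where
  "transport_map D s T \<longleftrightarrow> bij_betw T (D s) (D (1 - s))"

definition DeltaMDP :: "('x \<Rightarrow> nat \<Rightarrow> real) \<Rightarrow> (nat \<Rightarrow> 'x set) \<Rightarrow> nat \<Rightarrow> ('x \<Rightarrow> 'x) \<Rightarrow> real" where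
  "DeltaMDP f D s T = (1 / real (card (D s))) * (\<Sum>x\<in>D s. \<bar>f x s - f (T x) (1 - s)\<bar>)"

definition is_fair_matching_s :: "('x \<Rightarrow> nat \<Rightarrow> real) \<Rightarrow> (nat \<Rightarrow> 'x set) \<Rightarrow> nat \<Rightarrow> ('x \<Rightarrow> 'x) \<Rightarrow> bool" where
  "is_fair_matching_s f D s T \<longleftrightarrow> transport_map D s T \<and>
     (\<forall>T'. transport_map D s T' \<longrightarrow> DeltaMDP f D s T \<le> DeltaMDP f D s T')"

end

theory Submission
  imports Defs "HOL-Combinatorics.Transposition"
begin

text \<open>Since there are no ties, F_s(f_s(x)) = k/n where k is the rank of x in D_s, and
  F_{s'}^{-1}(k/n) is the value of the element of rank k in D_{s'}; so the candidate map
  matches the elements of D_s and D_{s'} in the order of their scores.  Such a monotone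
  matching is optimal for the cost |a - b| by an exchange argument: the element with the
  largest score in D_s can be matched to the element with the largest score in D_{s'}
  without increasing the cost, because |p - r| + |q - u| \<le> |p - u| + |q - r| whenever
  p \<le> q and r \<le> u.\<close>

lemma abs_diff_sorted_pairing_le:
  fixes p q r u :: real
  assumes "p \<le> q" "r \<le> u"
  shows "\<bar>p - r\<bar> + \<bar>q - u\<bar> \<le> \<bar>p - u\<bar> + \<bar>q - r\<bar>"
  using assms by (auto simp: abs_if)

lemma sum_abs_diff_match_maxima:
  fixes g h :: "'a \<Rightarrow> real"
  assumes "finite A" "bij_betw T A B" "a \<in> A" "b \<in> B"
    and a_max: "\<And>x. x \<in> A \<Longrightarrow> g x \<le> g a"
    and b_max: "\<And>y. y \<in> B \<Longrightarrow> h y \<le> h b"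
  obtains T' where "bij_betw T' A B" "T' a = b"
    "(\<Sum>x\<in>A. \<bar>g x - h (T' x)\<bar>) \<le> (\<Sum>x\<in>A. \<bar>g x - h (T x)\<bar>)"
proof -
  define a' where "a' = the_inv_into A T b"
  have a': "a' \<in> A" "T a' = b"
    using assms(2,4) unfolding a'_def
    by (auto simp: bij_betw_def the_inv_into_into f_the_inv_into_f)
  define T' where "T' = T \<circ> Transposition.transpose a a'"
  have "bij_betw T' A B"
    unfolding T'_def using assms(2,3) a' by (intro bij_betw_trans[of _ A A]) auto
  moreover have "T' a = b"
    using a' by (simp add: T'_def)
  moreover have "(\<Sum>x\<in>A. \<bar>g x - h (T' x)\<bar>) \<le> (\<Sum>x\<in>A. \<bar>g x - h (T x)\<bar>)"
  proof (cases "a' = a")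
    case True
    then show ?thesis by (simp add: T'_def)
  next
    case False
    let ?cost = "\<lambda>F x. \<bar>g x - h (F x)\<bar>"
    have split: "sum F A = sum F (A - {a, a'}) + F a + F a'" for F :: "'a \<Rightarrow> real"
      using sum.subset_diff[of "{a, a'}" A F] assms(1,3) a' False by (simp add: add.assoc)
    have "sum (?cost T') (A - {a, a'}) = sum (?cost T) (A - {a, a'})"
      by (rule sum.cong) (auto simp: T'_def)
    moreover have "?cost T' a + ?cost T' a' \<le> ?cost T a + ?cost T a'"
      using abs_diff_sorted_pairing_le[OF a_max[OF a'(1)] b_max, of "T a"]
        assms(2,3) a' \<open>T' a = b\<close> by (auto simp: T'_def bij_betw_def)
    ultimately show ?thesis
      using split[of "?cost T'"] split[of "?cost T"] by linarith
  qed
  ultimately show ?thesis using that by blast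
qed

lemma order_preserving_bij_minimises_sum_abs_diff:
  fixes g h :: "'a \<Rightarrow> real"
  assumes "finite A" "inj_on g A" "bij_betw R A B" "bij_betw T A B"
    and "\<And>x x'. x \<in> A \<Longrightarrow> x' \<in> A \<Longrightarrow> g x < g x' \<Longrightarrow> h (R x) < h (R x')"
  shows "(\<Sum>x\<in>A. \<bar>g x - h (R x)\<bar>) \<le> (\<Sum>x\<in>A. \<bar>g x - h (T x)\<bar>)"
  using assms
proof (induction A arbitrary: B T rule: finite_ranking_induct[where f = g])
  case empty
  then show ?case by simp
next
  case (insert a A)
  show ?case
  proof (cases "a \<in> A")
    case True
    then show ?thesis using insert.IH insert.prems by (simp add: insert_absorb)
  next
    case a_new: False
    note R_bij = insert.prems(2) and R_mono = insert.prems(4)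
    let ?b = "R a"
    have b: "?b \<in> B" using R_bij by (auto simp: bij_betw_def)
    have b_max: "h y \<le> h ?b" if "y \<in> B" for y
    proof -
      obtain x where x: "x \<in> insert a A" "y = R x"
        using R_bij \<open>y \<in> B\<close> by (auto simp: bij_betw_def)
      show ?thesis
      proof (cases "x = a")
        case False
        then have "g x \<noteq> g a"
          using x(1) insert.prems(1) by (auto simp: inj_on_def)
        then have "g x < g a"
          using x(1) insert.hyps(2) by fastforce
        then show ?thesis using R_mono x by fastforce
      qed (use x in simp)
    qed
    obtain T' where T': "bij_betw T' (insert a A) B" "T' a = ?b"
      and T'_le: "(\<Sum>x\<in>insert a A. \<bar>g x - h (T' x)\<bar>) \<le> (\<Sum>x\<in>insert a A. \<bar>g x - h (T x)\<bar>)"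
      using sum_abs_diff_match_maxima[of "insert a A" T B a ?b g h]
        insert.hyps insert.prems(3) b b_max by blast
    have "bij_betw R A (B - {?b})" "bij_betw T' A (B - {?b})"
      using bij_betw_DiffI[OF R_bij, of "{a}" "{?b}"]
        bij_betw_DiffI[OF T'(1), of "{a}" "{?b}"] T'(2) b a_new by auto
    moreover have "inj_on g A" using insert.prems(1) by (rule inj_on_subset) auto
    ultimately have "(\<Sum>x\<in>A. \<bar>g x - h (R x)\<bar>) \<le> (\<Sum>x\<in>A. \<bar>g x - h (T' x)\<bar>)"
      using insert.IH R_mono by blast
    then show ?thesis using T'_le T'(2) insert.hyps(1) a_new by simp
  qed
qed

definition rank_by :: "('a \<Rightarrow> real) \<Rightarrow> 'a set \<Rightarrow> 'a \<Rightarrow> nat" where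
  "rank_by g A x = card {y \<in> A. g y \<le> g x}"

lemma rank_by_mono:
  assumes "finite A" "g x \<le> g x'"
  shows "rank_by g A x \<le> rank_by g A x'"
  unfolding rank_by_def using assms by (intro card_mono) auto

lemma rank_by_strict_mono:
  assumes "finite A" "x' \<in> A" "g x < g x'"
  shows "rank_by g A x < rank_by g A x'"
proof -
  have "{y \<in> A. g y \<le> g x} \<subseteq> {y \<in> A. g y \<le> g x'}"
    and "x' \<in> {y \<in> A. g y \<le> g x'} - {y \<in> A. g y \<le> g x}"
    using assms by auto
  then have "{y \<in> A. g y \<le> g x} \<subset> {y \<in> A. g y \<le> g x'}"
    by blast
  then show ?thesis
    unfolding rank_by_def using assms(1) by (intro psubset_card_mono) auto
qed

lemma rank_by_less_iff:
  assumes "finite A" "x' \<in> A" "x \<in> A"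
  shows "rank_by g A x < rank_by g A x' \<longleftrightarrow> g x < g x'"
  using rank_by_strict_mono[OF assms(1,2)] rank_by_mono[OF assms(1), of g x' x] by force

lemma bij_betw_rank_by:
  assumes "finite A" "inj_on g A"
  shows "bij_betw (rank_by g A) A {1..card A}"
proof -
  have inj: "inj_on (rank_by g A) A"
  proof (rule inj_onI, rule ccontr)
    fix x x' assume "x \<in> A" "x' \<in> A" "rank_by g A x = rank_by g A x'" "x \<noteq> x'"
    then show False
      using assms rank_by_less_iff[of A x' x g] rank_by_less_iff[of A x x' g]
      by (auto simp: inj_on_def neq_iff)
  qed
  have "rank_by g A ` A \<subseteq> {1..card A}"
  proof
    fix k assume "k \<in> rank_by g A ` A"
    then obtain x where "x \<in> A" "k = rank_by g A x" by auto
    then show "k \<in> {1..card A}"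
      unfolding rank_by_def using assms(1)
      by (auto simp: Suc_le_eq card_gt_0_iff intro!: card_mono)
  qed
  then have "rank_by g A ` A = {1..card A}"
    using card_image[OF inj] by (intro card_subset_eq) auto
  then show ?thesis using inj by (simp add: bij_betw_def)
qed

lemma rank_by_le_card_iff:
  assumes "finite A" "y \<in> A"
  shows "rank_by g A y \<le> card {x \<in> A. g x \<le> t} \<longleftrightarrow> g y \<le> t"
proof
  assume "g y \<le> t"
  then show "rank_by g A y \<le> card {x \<in> A. g x \<le> t}"
    unfolding rank_by_def using assms(1) by (intro card_mono) auto
next
  assume le: "rank_by g A y \<le> card {x \<in> A. g x \<le> t}"
  show "g y \<le> t"
  proof (rule ccontr)
    assume "\<not> g y \<le> t"
    then have "{x \<in> A. g x \<le> t} \<subseteq> {x \<in> A. g x \<le> g y}"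
      and "y \<in> {x \<in> A. g x \<le> g y} - {x \<in> A. g x \<le> t}"
      using assms(2) by auto
    then have "{x \<in> A. g x \<le> t} \<subset> {x \<in> A. g x \<le> g y}"
      by blast
    then have "card {x \<in> A. g x \<le> t} < rank_by g A y"
      unfolding rank_by_def using assms(1) by (intro psubset_card_mono) auto
    with le show False by simp
  qed
qed

lemma ecdf_eq_rank_by:
  "ecdf f D s (f x s) = real (rank_by (\<lambda>y. f y s) (D s) x) / real (card (D s))"
  by (simp add: ecdf_def rank_by_def)

lemma equantile_rank_by:
  assumes "finite (D s)" "y \<in> D s"
  shows "equantile f D s (real (rank_by (\<lambda>y. f y s) (D s) y) / real (card (D s))) = f y s"
proof -
  have "real (card (D s)) > 0" using assms by (auto simp: card_gt_0_iff)
  then have "{t. real (rank_by (\<lambda>y. f y s) (D s) y) / real (card (D s)) \<le> ecdf f D s t} = {f y s..}"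
    using rank_by_le_card_iff[OF assms, of "\<lambda>y. f y s"]
    by (auto simp: ecdf_def divide_le_cancel)
  then show ?thesis by (simp add: equantile_def)
qed

lemma rank_match_eq_rank_inverse:
  assumes "finite (D (1 - s))" "inj_on (\<lambda>y. f y (1 - s)) (D (1 - s))"
    and "card (D s) = card (D (1 - s))"
    and "y \<in> D (1 - s)"
    and "rank_by (\<lambda>y. f y (1 - s)) (D (1 - s)) y = rank_by (\<lambda>x. f x s) (D s) x"
  shows "rank_match f D s x = y"
proof -
  have "equantile f D (1 - s) (ecdf f D s (f x s)) = f y (1 - s)"
    using equantile_rank_by[where D = D and s = "1 - s" and y = y and f = f] assms
    by (simp add: ecdf_eq_rank_by)
  then show ?thesis
    using the_inv_into_f_f[OF assms(2,4)] by (simp add: rank_match_def)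
qed

lemma rank_match_is_fair_matching:
  assumes fin: "finite (D s)" "finite (D (1 - s))"
    and same_card: "card (D s) = card (D (1 - s))"
    and inj: "inj_on (\<lambda>x. f x s) (D s)" "inj_on (\<lambda>y. f y (1 - s)) (D (1 - s))"
  shows "is_fair_matching_s f D s (rank_match f D s)"
proof -
  let ?g = "\<lambda>x. f x s" and ?h = "\<lambda>y. f y (1 - s)"
  let ?A = "D s" and ?B = "D (1 - s)"
  have rank_A: "bij_betw (rank_by ?g ?A) ?A {1..card ?A}"
    using bij_betw_rank_by[OF fin(1) inj(1)] .
  have rank_B: "bij_betw (rank_by ?h ?B) ?B {1..card ?A}"
    using bij_betw_rank_by[OF fin(2) inj(2)] same_card by simp
  define \<phi> where "\<phi> = the_inv_into ?B (rank_by ?h ?B) \<circ> rank_by ?g ?A"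
  have \<phi>_bij: "bij_betw \<phi> ?A ?B"
    unfolding \<phi>_def using bij_betw_trans[OF rank_A bij_betw_the_inv_into[OF rank_B]] .
  have \<phi>_rank: "rank_by ?h ?B (\<phi> x) = rank_by ?g ?A x" if "x \<in> ?A" for x
    unfolding \<phi>_def using rank_A rank_B that
    by (auto intro!: f_the_inv_into_f_bij_betw simp: bij_betw_def)
  have \<phi>_eq: "rank_match f D s x = \<phi> x" if "x \<in> ?A" for x
    using rank_match_eq_rank_inverse[where D = D and s = s and f = f and y = "\<phi> x"]
      fin(2) inj(2) same_card \<phi>_bij \<phi>_rank that
    by (auto simp: bij_betw_def)
  have bij: "bij_betw (rank_match f D s) ?A ?B"
    using bij_betw_cong[of ?A "rank_match f D s" \<phi>] \<phi>_bij \<phi>_eq by blast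
  have mono: "?h (rank_match f D s x) < ?h (rank_match f D s x')"
    if "x \<in> ?A" "x' \<in> ?A" "?g x < ?g x'" for x x'
    using that rank_by_strict_mono[OF fin(1), of x' ?g x] \<phi>_rank \<phi>_eq
      rank_by_less_iff[OF fin(2), of "\<phi> x'" "\<phi> x" ?h] \<phi>_bij
    by (auto simp: bij_betw_def)
  have "(\<Sum>x\<in>?A. \<bar>?g x - ?h (rank_match f D s x)\<bar>)
        \<le> (\<Sum>x\<in>?A. \<bar>?g x - ?h (T x)\<bar>)" if "bij_betw T ?A ?B" for T
    using order_preserving_bij_minimises_sum_abs_diff[where h = ?h, OF fin(1) inj(1) bij that mono]
    .
  then show ?thesis
    unfolding is_fair_matching_s_def transport_map_def DeltaMDP_def
    using bij by (auto intro: divide_right_mono)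
qed

theorem mainTheorem4:
  fixes D :: "nat \<Rightarrow> (real ^ 'd) set"
    and f :: "real ^ 'd \<Rightarrow> nat \<Rightarrow> real"
  assumes fin0: "finite (D 0)" and fin1: "finite (D 1)"
    and eqsize: "card (D 0) = card (D 1)"
    and range01: "\<And>x s. s \<in> {0, 1} \<Longrightarrow> f x s \<in> {0..1}"
    and noties: "\<And>s. s \<in> {0, 1} \<Longrightarrow> inj_on (\<lambda>x. f x s) (D s)"
  shows "\<forall>s \<in> {0, 1}. is_fair_matching_s f D s (rank_match f D s)"
proof
  fix s :: nat
  assume s: "s \<in> {0, 1}"
  then have "1 - s \<in> {0, 1}" by auto
  moreover have "finite (D s)" "finite (D (1 - s))" "card (D s) = card (D (1 - s))"
    using s fin0 fin1 eqsize by auto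
  ultimately show "is_fair_matching_s f D s (rank_match f D s)"
    using rank_match_is_fair_matching noties s by blast
qed

end
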